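(* Fix $b>0$. There exists $C=C(b)>0$ such that for all $x,y\in\mathbb Z_{\ge0}$ and all integers $N\ge n\ge1$, $$\mathfrak p^N_n(x,y)\le\frac{C}{\sqrt{n+1}}\,e^{-b|x-y|/\sqrt n}.$$
   Context: Let $p_n(z)$ be the probability that simple symmetric random walk on $\mathbb Z$ started at $0$ is at $z$ at time $n$. For $x,y\in\mathbb Z_{\ge0}$ set $p^{(1/2)}_n(x,y)=p_n(x-y)-p_n(x+y+2)$, $\psi(x;n)=\sum_{y\ge0}p^{(1/2)}_n(x,y)$, and for $0\le n\le N$, $\mathfrak p^N_n(x,y)=p^{(1/2)}_n(x,y)\,\psi(y;N-n)/\psi(x;N)$. *)

theory Defs
  imports "HOL-Analysis.Analysis"
begin

text \<open>Probability that simple symmetric random walk on the integers started at 0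
  is at z at time n.\<close>
definition srw_p :: "nat \<Rightarrow> int \<Rightarrow> real" where
  "srw_p n z = (if \<bar>z\<bar> \<le> int n \<and> even (int n + z)
                then real (n choose nat ((int n + z) div 2)) / 2 ^ n else 0)"

text \<open>Killed kernel p^(1/2)_n(x,y) = p_n(x-y) - p_n(x+y+2) on nonnegative integers.\<close>
definition p_half :: "nat \<Rightarrow> nat \<Rightarrow> nat \<Rightarrow> real" where
  "p_half n x y = srw_p n (int x - int y) - srw_p n (int x + int y + 2)"

definition psi :: "nat \<Rightarrow> nat \<Rightarrow> real" where
  "psi x n = (\<Sum>\<^sub>\<infinity>y\<in>(UNIV::nat set). p_half n x y)"

definition pfrak :: "nat \<Rightarrow> nat \<Rightarrow> nat \<Rightarrow> nat \<Rightarrow> real" where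
  "pfrak N n x y = p_half n x y * psi y (N - n) / psi x N"

end

theory Submission
  imports Defs
begin

text \<open>
  Comparing consecutive binomial coefficients with \<open>1 - t \<le> exp (- t)\<close>, and the central one with
  Wallis-type bounds, gives the Gaussian bound \<open>p\<^sub>n(z) \<le> 2/\<surd>(n+1) \<cdot> exp (-z\<^sup>2/(8(n+1)))\<close>;
  telescoping \<open>p\<^sub>n(x-y) - p\<^sub>n(x+y+2)\<close> in steps of two adds the boundary factor
  \<open>(min x y + 1)(x + y + 1)/(n + 1)\<close>. By reflection, \<open>\<psi>(x;N)\<close> is the free probability of the
  window \<open>[-x-1, x]\<close>, hence of order \<open>min 1 ((x+1)/\<surd>N)\<close>. Since one of \<open>n\<close>, \<open>N - n\<close> is at
  least a quarter of \<open>N + 1\<close>, the ratio \<open>\<psi>(y;N-n)/\<psi>(x;N)\<close> is controlled by the boundary factor,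
  giving \<open>\<pp>\<^sup>N\<^sub>n(x,y) \<le> C (4+u)\<^sup>2 exp (-u\<^sup>2/8)/\<surd>(n+1)\<close> with \<open>u = |x-y|/\<surd>(n+1)\<close>; completing
  the square absorbs the polynomial factor into \<open>exp (-2bu)\<close>.
\<close>

subsection \<open>Free walk probabilities\<close>

lemma srw_p_nonneg: "srw_p n z \<ge> 0"
  by (simp add: srw_p_def)

lemma srw_p_binomial: "srw_p n (2 * int k - int n) = real (n choose k) / 2 ^ n"
proof (cases "k \<le> n")
  case True
  have "nat ((int n + (2 * int k - int n)) div 2) = k" by simp
  then show ?thesis using True by (simp add: srw_p_def)
qed (simp add: srw_p_def binomial_eq_0)

lemma srw_p_eq_0_odd: "odd (int n + z) \<Longrightarrow> srw_p n z = 0"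
  by (simp add: srw_p_def)

lemma srw_p_eq_0_far: "\<bar>z\<bar> > int n \<Longrightarrow> srw_p n z = 0"
  by (simp add: srw_p_def)

lemma srw_p_cases:
  obtains k where "z = 2 * int k - int n" | "srw_p n z = 0"
proof (cases "even (int n + z)")
  case True
  then obtain t where t: "int n + z = 2 * t" by (metis dvd_def)
  show ?thesis
  proof (cases "t \<ge> 0")
    case True
    then have "z = 2 * int (nat t) - int n" using t by simp
    then show ?thesis using that by blast
  next
    case False
    then have "\<bar>z\<bar> > int n" using t by auto
    then show ?thesis using that srw_p_eq_0_far by blast
  qed
qed (use that srw_p_eq_0_odd in blast)

lemma srw_p_minus: "srw_p n (- z) = srw_p n z"
proof (cases "\<bar>z\<bar> \<le> int n \<and> even (int n + z)")
  case True
  then obtain t where t: "int n + z = 2 * t" by (metis dvd_def)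
  define k where "k = nat t"
  have z: "z = 2 * int k - int n" and kn: "k \<le> n" using True t by (auto simp: k_def)
  have "- z = 2 * int (n - k) - int n" using z kn by simp
  then show ?thesis using z kn by (simp only: srw_p_binomial binomial_symmetric[OF kn, symmetric])
next
  case False
  then have "\<not> (\<bar>- z\<bar> \<le> int n \<and> even (int n + - z))"
    by (metis abs_minus_cancel even_add even_minus)
  then show ?thesis using False by (simp only: srw_p_def if_False)
qed

lemma real_Suc_times_binomial_Suc:
  "real (Suc k) * real (n choose Suc k) = (real n - real k) * real (n choose k)"
proof (cases "k \<le> n")
  case True
  have "Suc k * (n choose Suc k) = (n - k) * (n choose k)"
    by (metis binomial_absorb_comp binomial_absorption)
  then show ?thesis using True by (metis of_nat_diff of_nat_mult)
qed (simp add: binomial_eq_0)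

lemma srw_p_Suc_ratio:
  "srw_p n (2 * int (Suc k) - int n) * real (Suc k) = srw_p n (2 * int k - int n) * (real n - real k)"
  using real_Suc_times_binomial_Suc[of k n] by (simp only: srw_p_binomial) (simp add: field_simps)

lemma srw_p_add_2_ratio:
  assumes "z \<ge> 0"
  shows "srw_p n (z + 2) * (real n + real_of_int z + 2) = srw_p n z * (real n - real_of_int z)"
proof (cases z n rule: srw_p_cases)
  case (1 k)
  have "z + 2 = 2 * int (Suc k) - int n" using 1 by simp
  then have "srw_p n (z + 2) * real (Suc k) = srw_p n z * (real n - real k)"
    using srw_p_Suc_ratio[of n k] 1 by (simp only:)
  moreover have "real n + real_of_int z + 2 = 2 * real (Suc k)" "real n - real_of_int z = 2 * (real n - real k)"
    using 1 by simp_all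
  ultimately show ?thesis by (metis mult.left_commute)
next
  case 2
  have "srw_p n (z + 2) = 0"
  proof (cases "odd (int n + z)")
    case False
    then have "\<bar>z\<bar> > int n" using 2 by (auto simp: srw_p_def split: if_splits)
    then show ?thesis using assms by (intro srw_p_eq_0_far) simp
  qed (simp add: srw_p_eq_0_odd)
  then show ?thesis using 2 by simp
qed

subsection \<open>The central probability\<close>

definition central_binomial_prob :: "nat \<Rightarrow> real" where
  "central_binomial_prob m = real ((2 * m) choose m) / 4 ^ m"

lemma central_binomial_Suc: "(2 * Suc m choose Suc m) = 2 * (Suc (2 * m) choose m)"
proof -
  have "(Suc (2 * m) choose Suc m) = (Suc (2 * m) choose m)"
    using binomial_symmetric[of m "Suc (2 * m)"] by simp
  moreover have "2 * Suc m = Suc (Suc (2 * m))" by simp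
  ultimately show ?thesis by (simp only: binomial_Suc_Suc)
qed

lemma central_binomial_prob_Suc:
  "central_binomial_prob (Suc m) * (2 * real m + 2) = central_binomial_prob m * (2 * real m + 1)"
proof -
  have "Suc m * (Suc (2 * m) choose m) = Suc (2 * m) * ((2 * m) choose m)"
    using Suc_times_binomial binomial_symmetric[of m "Suc (2 * m)"] by simp
  then have "real (Suc m * (Suc (2 * m) choose m)) = real (Suc (2 * m) * ((2 * m) choose m))"
    by (simp only:)
  then have "(real m + 1) * real (Suc (2 * m) choose m) = (2 * real m + 1) * real ((2 * m) choose m)"
    by (simp add: algebra_simps)
  moreover have "central_binomial_prob (Suc m) * (2 * real m + 2) = (real m + 1) * real (Suc (2 * m) choose m) / 4 ^ m"
    unfolding central_binomial_prob_def central_binomial_Suc by (simp add: field_simps)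
  ultimately show ?thesis by (simp add: central_binomial_prob_def)
qed

lemma central_binomial_prob_sq_le: "central_binomial_prob m ^ 2 * (2 * real m + 1) \<le> 1"
proof (induction m)
  case 0
  then show ?case by (simp add: central_binomial_prob_def)
next
  case (Suc m)
  define f where "f = (2 * real m + 1) * (2 * real m + 3) / (2 * real m + 2)\<^sup>2"
  have c: "central_binomial_prob (Suc m) = central_binomial_prob m * (2 * real m + 1) / (2 * real m + 2)"
    using central_binomial_prob_Suc[of m] by (simp add: field_simps)
  have "central_binomial_prob (Suc m) ^ 2 * (2 * real (Suc m) + 1)
      = central_binomial_prob m ^ 2 * (2 * real m + 1)\<^sup>2 / (2 * real m + 2)\<^sup>2 * (2 * real m + 3)"
    unfolding c by (simp add: power_mult_distrib power_divide)
  also have "\<dots> = (central_binomial_prob m ^ 2 * (2 * real m + 1)) * f"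
    by (simp add: f_def power2_eq_square)
  also have "\<dots> \<le> 1 * 1"
  proof (rule mult_mono)
    have "(2 * real m + 1) * (2 * real m + 3) \<le> (2 * real m + 2)\<^sup>2"
      by (simp add: power2_eq_square algebra_simps)
    then show "f \<le> 1" unfolding f_def by (subst divide_le_eq_1_pos) auto
  qed (use Suc in \<open>auto simp: f_def\<close>)
  finally show ?case by simp
qed

lemma central_binomial_prob_sq_ge:
  assumes "m \<ge> 1"
  shows "central_binomial_prob m ^ 2 * (4 * real m) \<ge> 1"
  using assms
proof (induction m rule: dec_induct)
  case base
  then show ?case by (simp add: central_binomial_prob_def power2_eq_square)
next
  case (step m)
  define r where "r = (2 * real m + 1) / (2 * real m + 2)"
  have "central_binomial_prob (Suc m) = central_binomial_prob m * r"
    using central_binomial_prob_Suc[of m] by (simp add: r_def field_simps)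
  then have "central_binomial_prob (Suc m) ^ 2 * (4 * real (Suc m))
      = (central_binomial_prob m ^ 2 * (4 * real m)) * ((real m + 1) * r\<^sup>2 / real m)"
    using step.hyps by (simp add: power_mult_distrib field_simps)
  also have "\<dots> \<ge> 1 * 1"
  proof (rule mult_mono)
    have "real m * (2 * real m + 2)\<^sup>2 \<le> (2 * real m + 1)\<^sup>2 * (real m + 1)"
      by (simp add: power2_eq_square algebra_simps)
    then show "1 \<le> (real m + 1) * r\<^sup>2 / real m"
      using step.hyps by (simp add: r_def power_divide field_simps)
  qed (use step in auto)
  finally show ?case by simp
qed

definition srw_mode :: "nat \<Rightarrow> real" where
  "srw_mode n = srw_p n (int (n mod 2))"

lemma srw_mode_even: "srw_mode (2 * m) = central_binomial_prob m"
proof -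
  have "srw_mode (2 * m) = srw_p (2 * m) (2 * int m - int (2 * m))" by (simp add: srw_mode_def)
  then show ?thesis by (simp only: srw_p_binomial central_binomial_prob_def) (simp add: power_mult)
qed

lemma srw_mode_odd: "srw_mode (Suc (2 * m)) = central_binomial_prob (Suc m)"
proof -
  have "srw_mode (Suc (2 * m)) = srw_p (Suc (2 * m)) (2 * int (Suc m) - int (Suc (2 * m)))"
    by (simp add: srw_mode_def)
  also have "\<dots> = real (Suc (2 * m) choose Suc m) / 2 ^ Suc (2 * m)" by (simp only: srw_p_binomial)
  also have "\<dots> = central_binomial_prob (Suc m)"
  proof -
    have c: "(2 * Suc m choose Suc m) = 2 * (Suc (2 * m) choose Suc m)"
      using central_binomial_Suc[of m] binomial_symmetric[of m "Suc (2 * m)"] by simp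
    show ?thesis unfolding central_binomial_prob_def c by (simp add: power_mult del: binomial_Suc_Suc)
  qed
  finally show ?thesis .
qed

lemma srw_mode_nonneg: "srw_mode n \<ge> 0"
  by (simp add: srw_mode_def srw_p_nonneg)

lemma srw_mode_sq_le: "srw_mode n ^ 2 * (real n + 1) \<le> 1"
proof (cases "even n")
  case True
  then obtain m where "n = 2 * m" by (metis evenE)
  then show ?thesis using central_binomial_prob_sq_le[of m] srw_mode_even by simp
next
  case False
  then obtain m where n: "n = Suc (2 * m)" by (metis oddE Suc_eq_plus1)
  have "central_binomial_prob (Suc m) ^ 2 * (real n + 1)
      \<le> central_binomial_prob (Suc m) ^ 2 * (2 * real (Suc m) + 1)"
    using n by (intro mult_left_mono) auto
  then show ?thesis using central_binomial_prob_sq_le[of "Suc m"] n srw_mode_odd by simp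
qed

lemma srw_mode_sq_ge: "srw_mode n ^ 2 * (2 * (real n + 1)) \<ge> 1"
proof (cases "even n")
  case True
  then obtain m where n: "n = 2 * m" by (metis evenE)
  show ?thesis
  proof (cases "m = 0")
    case True
    then show ?thesis using n by (simp add: srw_mode_def srw_p_def)
  next
    case False
    have "central_binomial_prob m ^ 2 * (4 * real m) \<le> central_binomial_prob m ^ 2 * (2 * (real n + 1))"
      using n by (intro mult_left_mono) auto
    then show ?thesis using central_binomial_prob_sq_ge[of m] False n srw_mode_even by simp
  qed
next
  case False
  then obtain m where n: "n = Suc (2 * m)" by (metis oddE Suc_eq_plus1)
  then show ?thesis using central_binomial_prob_sq_ge[of "Suc m"] srw_mode_odd by simp
qed

lemma srw_mode_le: "srw_mode n \<le> 1 / sqrt (real n + 1)"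
proof -
  have "srw_mode n \<le> sqrt (1 / (real n + 1))"
    using srw_mode_sq_le[of n] srw_mode_nonneg[of n] by (intro real_le_rsqrt) (simp add: field_simps)
  then show ?thesis by (simp add: real_sqrt_divide)
qed

lemma srw_mode_ge: "srw_mode n \<ge> 2 / (3 * sqrt (real n + 1))"
proof (rule power2_le_imp_le)
  have "(2 / (3 * sqrt (real n + 1)))\<^sup>2 * (2 * (real n + 1)) \<le> 1"
    by (simp add: power_divide power_mult_distrib)
  then show "(2 / (3 * sqrt (real n + 1)))\<^sup>2 \<le> (srw_mode n)\<^sup>2"
    using srw_mode_sq_ge[of n] by (simp add: field_simps)
qed (rule srw_mode_nonneg)

subsection \<open>Gaussian bounds\<close>

lemma srw_p_add_2_le:
  assumes "z \<ge> 0"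
  shows "srw_p n (z + 2) \<le> srw_p n z * exp (- ((real_of_int z + 1) / (real n + 1)))"
proof (cases "z \<le> int n")
  case True
  have pos: "real n + real_of_int z + 2 > 0" using assms by simp
  have "srw_p n (z + 2) = srw_p n z * ((real n - real_of_int z) / (real n + real_of_int z + 2))"
    using srw_p_add_2_ratio[OF assms, of n] pos by (simp add: field_simps)
  also have "\<dots> \<le> srw_p n z * (1 - (real_of_int z + 1) / (real n + 1))"
  proof (rule mult_left_mono)
    have "(real n - real_of_int z) * (real n + 1) \<le> (real n - real_of_int z) * (real n + real_of_int z + 2)"
      using True assms by (intro mult_left_mono) auto
    then show "(real n - real_of_int z) / (real n + real_of_int z + 2) \<le> 1 - (real_of_int z + 1) / (real n + 1)"
      using pos by (simp add: field_simps)
  qed (rule srw_p_nonneg)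
  also have "\<dots> \<le> srw_p n z * exp (- ((real_of_int z + 1) / (real n + 1)))"
    using exp_ge_add_one_self[of "- ((real_of_int z + 1) / (real n + 1))"]
    by (intro mult_left_mono) (auto simp: srw_p_nonneg)
  finally show ?thesis .
next
  case False
  then show ?thesis by (simp add: srw_p_eq_0_far)
qed

lemma srw_p_add_2_ge:
  assumes "z \<ge> 0"
  shows "srw_p n (z + 2) \<ge> srw_p n z * (1 - (2 * real_of_int z + 2) / (real n + 2))"
proof -
  have pos: "real n + real_of_int z + 2 > 0" using assms by simp
  have "srw_p n (z + 2) = srw_p n z * (1 - (2 * real_of_int z + 2) / (real n + real_of_int z + 2))"
    using srw_p_add_2_ratio[OF assms, of n] pos by (simp add: field_simps)
  also have "\<dots> \<ge> srw_p n z * (1 - (2 * real_of_int z + 2) / (real n + 2))"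
    using assms by (intro mult_left_mono diff_left_mono divide_left_mono) (auto simp: srw_p_nonneg)
  finally show ?thesis .
qed

lemma srw_p_le_mode_gaussian:
  "srw_p n (int (n mod 2) + 2 * int j) \<le> srw_mode n * exp (- (real j)\<^sup>2 / (real n + 1))"
proof (induction j)
  case 0
  then show ?case by (simp add: srw_mode_def)
next
  case (Suc j)
  define z where "z = int (n mod 2) + 2 * int j"
  have "srw_p n (z + 2) \<le> srw_p n z * exp (- ((real_of_int z + 1) / (real n + 1)))"
    by (rule srw_p_add_2_le) (simp add: z_def)
  also have "\<dots> \<le> srw_mode n * exp (- (real j)\<^sup>2 / (real n + 1)) * exp (- ((2 * real j + 1) / (real n + 1)))"
  proof (rule mult_mono)
    have "(2 * real j + 1) / (real n + 1) \<le> (real_of_int z + 1) / (real n + 1)"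
      by (intro divide_right_mono) (auto simp: z_def)
    then show "exp (- ((real_of_int z + 1) / (real n + 1))) \<le> exp (- ((2 * real j + 1) / (real n + 1)))"
      by simp
  qed (use Suc.IH srw_mode_nonneg[of n] in \<open>simp_all add: z_def\<close>)
  also have "\<dots> = srw_mode n * exp (- (real (Suc j))\<^sup>2 / (real n + 1))"
    by (simp add: mult.assoc exp_add[symmetric] power2_eq_square add_divide_distrib[symmetric] algebra_simps)
  finally show ?case by (simp add: z_def algebra_simps)
qed

lemma srw_p_ge_mode_near_centre:
  "srw_p n (int (n mod 2) + 2 * int i) \<ge> srw_mode n * (1 - 2 * real i * (real i + 1) / (real n + 2))"
proof (induction i)
  case 0
  then show ?case by (simp add: srw_mode_def)
next
  case (Suc i)
  define z where "z = int (n mod 2) + 2 * int i"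
  define S where "S = 2 * real i * (real i + 1) / (real n + 2)"
  define t where "t = 4 * (real i + 1) / (real n + 2)"
  have S': "2 * real (Suc i) * (real (Suc i) + 1) / (real n + 2) = S + t"
    by (simp add: S_def t_def add_divide_distrib[symmetric] algebra_simps)
  have St: "S \<ge> 0" "t \<ge> 0" by (simp_all add: S_def t_def)
  have main: "srw_mode n * (1 - (S + t)) \<le> srw_p n (z + 2)"
  proof (cases "S + t \<le> 1")
    case True
    then have t1: "0 \<le> 1 - t" using St by linarith
    have "srw_mode n * (1 - (S + t)) \<le> srw_mode n * (1 - S) * (1 - t)"
      using St srw_mode_nonneg[of n] by (simp add: mult_left_mono algebra_simps)
    also have "\<dots> \<le> srw_p n z * (1 - (2 * real_of_int z + 2) / (real n + 2))"
    proof (rule mult_mono)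
      have "real (n mod 2) \<le> 1" by simp
      then show "1 - t \<le> 1 - (2 * real_of_int z + 2) / (real n + 2)"
        by (auto simp: z_def t_def intro!: divide_right_mono)
    qed (use Suc.IH t1 in \<open>simp_all add: z_def S_def srw_p_nonneg\<close>)
    also have "\<dots> \<le> srw_p n (z + 2)" by (rule srw_p_add_2_ge) (simp add: z_def)
    finally show ?thesis .
  next
    case False
    then have "srw_mode n * (1 - (S + t)) \<le> 0"
      using srw_mode_nonneg[of n] by (simp add: mult_nonneg_nonpos)
    then show ?thesis using srw_p_nonneg order_trans by blast
  qed
  have z2: "int (n mod 2) + 2 * int (Suc i) = z + 2" by (simp add: z_def)
  show ?case unfolding S' z2 by (rule main)
qed

definition srw_envelope :: "nat \<Rightarrow> real \<Rightarrow> real" where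
  "srw_envelope n z = 2 / sqrt (real n + 1) * exp (- z\<^sup>2 / (8 * (real n + 1)))"

lemma srw_envelope_nonneg: "srw_envelope n z \<ge> 0"
  by (simp add: srw_envelope_def)

lemma srw_envelope_abs_mono: "\<bar>z\<bar> \<le> \<bar>w\<bar> \<Longrightarrow> srw_envelope n w \<le> srw_envelope n z"
  unfolding srw_envelope_def
  by (intro mult_left_mono) (auto simp: divide_right_mono abs_le_square_iff)

lemma srw_envelope_le: "srw_envelope n z \<le> 2 / sqrt (real n + 1)"
  unfolding srw_envelope_def
  using mult_left_mono[of "exp (- z\<^sup>2 / (8 * (real n + 1)))" 1 "2 / sqrt (real n + 1)"] by simp

lemma exp_neg_square_le_twice:
  fixes c j z :: real
  assumes "c \<ge> 1" and "\<bar>z\<bar> \<le> 2 * j + 1"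
  shows "exp (- j\<^sup>2 / c) \<le> 2 * exp (- z\<^sup>2 / (8 * c))"
proof -
  have "z\<^sup>2 \<le> (2 * j + 1)\<^sup>2"
    using assms(2) by (simp add: abs_le_square_iff[symmetric])
  also have "\<dots> = 8 * j\<^sup>2 + 2 - (2 * j - 1)\<^sup>2"
    by (simp add: power2_eq_square algebra_simps)
  finally have zsq: "z\<^sup>2 \<le> 8 * j\<^sup>2 + 2" using zero_le_power2[of "2 * j - 1"] by linarith
  have "- j\<^sup>2 / c = (8 * - j\<^sup>2) / (8 * c)"
    by (rule mult_divide_mult_cancel_left[symmetric]) simp
  also have "\<dots> \<le> (2 - z\<^sup>2) / (8 * c)"
    using zsq assms(1) by (intro divide_right_mono) auto
  also have "\<dots> = 1 / (4 * c) + - z\<^sup>2 / (8 * c)"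
    using assms(1) by (simp add: field_simps)
  finally have "exp (- j\<^sup>2 / c) \<le> exp (1 / (4 * c)) * exp (- z\<^sup>2 / (8 * c))"
    by (simp add: exp_add[symmetric])
  also have "\<dots> \<le> 2 * exp (- z\<^sup>2 / (8 * c))"
  proof (rule mult_right_mono)
    have "exp (1 / (4 * c)) \<le> 1 + 2 * (1 / (4 * c))"
      using assms(1) by (intro real_exp_bound_lemma) (auto simp: field_simps)
    also have "\<dots> \<le> 2" using assms(1) by (simp add: field_simps)
    finally show "exp (1 / (4 * c)) \<le> 2" .
  qed simp
  finally show ?thesis .
qed

lemma srw_p_le_envelope_nonneg:
  assumes "z \<ge> 0"
  shows "srw_p n z \<le> srw_envelope n (real_of_int z)"
proof (cases "even (int n + z)")
  case True
  then have "\<exists>t\<ge>0. z = int (n mod 2) + 2 * t" using assms by presburger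
  then obtain t where t: "t \<ge> 0" "z = int (n mod 2) + 2 * t" by blast
  define j where "j = nat t"
  have z: "z = int (n mod 2) + 2 * int j" using t by (simp add: j_def)
  have "srw_p n z \<le> srw_mode n * exp (- (real j)\<^sup>2 / (real n + 1))"
    using srw_p_le_mode_gaussian[of n j] z by simp
  also have "\<dots> \<le> 1 / sqrt (real n + 1) * (2 * exp (- (real_of_int z)\<^sup>2 / (8 * (real n + 1))))"
    using z by (intro mult_mono srw_mode_le exp_neg_square_le_twice) auto
  finally show ?thesis by (simp add: srw_envelope_def)
qed (simp add: srw_p_eq_0_odd srw_envelope_nonneg)

lemma srw_p_le_envelope: "srw_p n z \<le> srw_envelope n (real_of_int z)"
proof (cases "z \<ge> 0")
  case False
  then show ?thesis
    using srw_p_le_envelope_nonneg[of "- z" n] by (simp add: srw_p_minus srw_envelope_def)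
qed (rule srw_p_le_envelope_nonneg)

subsection \<open>The survival probability \<open>\<psi>\<close>\<close>

lemma p_half_eq_0: "y > x + n \<Longrightarrow> p_half n x y = 0"
  unfolding p_half_def by (simp add: srw_p_eq_0_far)

lemma psi_eq_sum_lessThan: "psi x N = (\<Sum>y<R. p_half N x y)" if "R \<ge> x + N + 1"
proof -
  have "psi x N = infsum (\<lambda>y. p_half N x y) {..<R}"
    unfolding psi_def
    by (rule infsum_cong_neutral) (use that p_half_eq_0 in auto)
  then show ?thesis by simp
qed

lemma sum_p_half_lessThan:
  "(\<Sum>y<R. p_half N x y) = (\<Sum>w\<in>{int x - int R + 1..int x}. srw_p N w) - (\<Sum>w\<in>{int x + 2..int x + int R + 1}. srw_p N w)"
proof (induction R)
  case 0
  then show ?case by simp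
next
  case (Suc R)
  have s1: "{int x - int (Suc R) + 1..int x} = insert (int x - int R) {int x - int R + 1..int x}" by auto
  have s2: "{int x + 2..int x + int (Suc R) + 1} = insert (int x + int R + 2) {int x + 2..int x + int R + 1}" by auto
  have "(\<Sum>y<Suc R. p_half N x y) = (\<Sum>y<R. p_half N x y) + p_half N x R" by simp
  also have "\<dots> = (\<Sum>w\<in>{int x - int R + 1..int x}. srw_p N w) - (\<Sum>w\<in>{int x + 2..int x + int R + 1}. srw_p N w)
     + (srw_p N (int x - int R) - srw_p N (int x + int R + 2))"
    using Suc by (simp add: p_half_def)
  also have "\<dots> = (\<Sum>w\<in>{int x - int (Suc R) + 1..int x}. srw_p N w) - (\<Sum>w\<in>{int x + 2..int x + int (Suc R) + 1}. srw_p N w)"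
    unfolding s1 s2 by simp
  finally show ?case .
qed

lemma sum_srw_p_truncate:
  assumes "K \<ge> int N"
  shows "(\<Sum>w\<in>{a..b}. srw_p N w) = (\<Sum>w\<in>{a..min b K}. srw_p N w)"
  by (rule sum.mono_neutral_right) (use assms in \<open>auto intro!: srw_p_eq_0_far\<close>)

lemma sum_srw_p_reflect: "(\<Sum>w\<in>{a..b}. srw_p N w) = (\<Sum>w\<in>{-b..-a}. srw_p N w)"
proof -
  have "(\<Sum>w\<in>{-b..-a}. srw_p N w) = (\<Sum>w\<in>uminus ` {a..b}. srw_p N w)"
    by (simp add: image_uminus_atLeastAtMost)
  also have "\<dots> = (\<Sum>w\<in>{a..b}. srw_p N (-w))"
    by (subst sum.reindex) (auto simp: inj_on_def)
  finally show ?thesis by (simp add: srw_p_minus)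
qed

lemma psi_eq_sum_window: "psi x N = (\<Sum>w\<in>{-int x - 1..int x}. srw_p N w)"
proof -
  define R where "R = 2 * x + N + 2"
  define K where "K = int x + int N + 1"
  have A: "(\<Sum>w\<in>{-K..int x}. srw_p N w) = (\<Sum>w\<in>{-K..-int x - 2}. srw_p N w) + (\<Sum>w\<in>{-int x - 1..int x}. srw_p N w)"
  proof -
    have "{-K..int x} = {-K..-int x - 2} \<union> {-int x - 1..int x}" by (auto simp: K_def)
    then show ?thesis by (simp add: sum.union_disjoint)
  qed
  have B: "(\<Sum>w\<in>{int x + 2..int x + int R + 1}. srw_p N w) = (\<Sum>w\<in>{-K..-int x - 2}. srw_p N w)"
  proof -
    have "(\<Sum>w\<in>{int x + 2..int x + int R + 1}. srw_p N w) = (\<Sum>w\<in>{int x + 2..min (int x + int R + 1) K}. srw_p N w)"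
      by (rule sum_srw_p_truncate) (simp add: K_def)
    moreover have "min (int x + int R + 1) K = K" by (simp add: K_def R_def)
    ultimately show ?thesis by (simp add: sum_srw_p_reflect[where a="int x + 2" and b=K])
  qed
  have "psi x N = (\<Sum>y<R. p_half N x y)" by (rule psi_eq_sum_lessThan) (simp add: R_def)
  also have "\<dots> = (\<Sum>w\<in>{-K..int x}. srw_p N w) - (\<Sum>w\<in>{int x + 2..int x + int R + 1}. srw_p N w)"
    unfolding sum_p_half_lessThan by (simp add: R_def K_def algebra_simps)
  finally show ?thesis using A B by simp
qed

lemma sum_srw_p_eq_1:
  assumes "K \<ge> int N"
  shows "(\<Sum>w\<in>{-K..K}. srw_p N w) = 1"
proof -
  define g where "g = (\<lambda>k::nat. 2 * int k - int N)"
  have img: "g ` {..N} \<subseteq> {-K..K}" using assms by (auto simp: g_def)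
  have "(\<Sum>w\<in>{-K..K}. srw_p N w) = (\<Sum>w\<in>g ` {..N}. srw_p N w)"
  proof (rule sum.mono_neutral_right)
    show "\<forall>w\<in>{-K..K} - g ` {..N}. srw_p N w = 0"
    proof
      fix w assume w: "w \<in> {-K..K} - g ` {..N}"
      show "srw_p N w = 0"
      proof (cases w N rule: srw_p_cases)
        case (1 k)
        then have "k > N" using w by (auto simp: g_def)
        then show ?thesis using 1 by (simp add: srw_p_binomial binomial_eq_0)
      qed
    qed
  qed (use img in auto)
  also have "\<dots> = (\<Sum>k\<le>N. srw_p N (g k))"
    by (subst sum.reindex) (auto simp: inj_on_def g_def)
  also have "\<dots> = (\<Sum>k\<le>N. real (N choose k) / 2 ^ N)" by (simp add: g_def srw_p_binomial)
  also have "\<dots> = real (\<Sum>k\<le>N. N choose k) / 2 ^ N" by (simp add: sum_divide_distrib)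
  also have "\<dots> = 1" by (simp only: choose_row_sum) simp
  finally show ?thesis .
qed

lemma psi_nonneg: "psi x N \<ge> 0"
  unfolding psi_eq_sum_window by (intro sum_nonneg) (simp add: srw_p_nonneg)

lemma psi_le_1: "psi x N \<le> 1"
proof -
  define K where "K = max (int x + 1) (int N)"
  have "psi x N \<le> (\<Sum>w\<in>{-K..K}. srw_p N w)"
    unfolding psi_eq_sum_window by (rule sum_mono2) (auto simp: K_def srw_p_nonneg)
  also have "\<dots> = 1" by (rule sum_srw_p_eq_1) (simp add: K_def)
  finally show ?thesis .
qed

lemma psi_le: "psi x N \<le> 4 * (real x + 1) / sqrt (real N + 1)"
proof -
  have "psi x N \<le> of_nat (card {-int x - 1..int x}) * (2 / sqrt (real N + 1))"
    unfolding psi_eq_sum_window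
    by (rule sum_bounded_above) (use srw_p_le_envelope srw_envelope_le order_trans in blast)
  also have "of_nat (card {-int x - 1..int x}) = 2 * (real x + 1)" by simp
  finally show ?thesis by simp
qed

lemma psi_ge_sum_near_centre:
  assumes "2 * m \<le> x"
  shows "psi x N \<ge> (\<Sum>i\<le>m. srw_p N (int (N mod 2) + 2 * int i))"
proof -
  define f where "f = (\<lambda>i::nat. - (int (N mod 2) + 2 * int i))"
  have "(\<Sum>i\<le>m. srw_p N (int (N mod 2) + 2 * int i)) = (\<Sum>i\<le>m. srw_p N (f i))"
    unfolding f_def by (simp only: srw_p_minus)
  also have "\<dots> = (\<Sum>w\<in>f ` {..m}. srw_p N w)"
    by (subst sum.reindex) (auto simp: inj_on_def f_def)
  also have "\<dots> \<le> (\<Sum>w\<in>{-int x - 1..int x}. srw_p N w)"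
    using assms by (intro sum_mono2) (auto simp: f_def srw_p_nonneg)
  finally show ?thesis by (simp add: psi_eq_sum_window)
qed

lemma psi_ge_mode:
  assumes "2 * m \<le> x" and "4 * m * (m + 1) \<le> N + 2"
  shows "psi x N \<ge> (real m + 1) * srw_mode N / 2"
proof -
  have "srw_mode N / 2 \<le> srw_p N (int (N mod 2) + 2 * int i)" if "i \<le> m" for i
  proof -
    have "4 * i * (i + 1) \<le> N + 2"
      using that assms(2) by (meson le_trans add_le_mono mult_le_mono order_refl)
    then have "4 * real i * (real i + 1) \<le> real N + 2"
      by (metis (mono_tags) of_nat_le_iff of_nat_mult of_nat_add of_nat_numeral of_nat_1)
    then have "1 / 2 \<le> 1 - 2 * real i * (real i + 1) / (real N + 2)"
      by (simp add: field_simps)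
    then have "srw_mode N * (1 / 2) \<le> srw_mode N * (1 - 2 * real i * (real i + 1) / (real N + 2))"
      by (rule mult_left_mono) (rule srw_mode_nonneg)
    also have "\<dots> \<le> srw_p N (int (N mod 2) + 2 * int i)"
      by (rule srw_p_ge_mode_near_centre)
    finally show ?thesis by simp
  qed
  then have "(\<Sum>i\<le>m. srw_mode N / 2) \<le> (\<Sum>i\<le>m. srw_p N (int (N mod 2) + 2 * int i))"
    by (intro sum_mono) simp
  also have "\<dots> \<le> psi x N" by (rule psi_ge_sum_near_centre[OF assms(1)])
  finally show ?thesis by (simp add: algebra_simps)
qed

lemma ex_nat_sqrt_bracket: "\<exists>I::nat. 4 * I * (I + 1) \<le> N + 2 \<and> sqrt (real N + 1) \<le> 4 * (real I + 1)"
proof -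
  define A where "A = {I::nat. 4 * I * (I + 1) \<le> N + 2}"
  have "finite A" by (rule finite_subset[of _ "{..N + 2}"]) (auto simp: A_def)
  moreover have "0 \<in> A" by (simp add: A_def)
  ultimately have I: "Max A \<in> A" "Suc (Max A) \<notin> A"
    using Max_in Max_ge by (blast, metis Suc_n_not_le_n)
  define I where "I = Max A"
  have "4 * (I + 1) * (I + 2) \<le> 4 * (I + 1) * (4 * (I + 1))"
    by (intro mult_le_mono2) simp
  then have "N + 1 \<le> (4 * (I + 1))\<^sup>2"
    using I(2) by (simp add: A_def I_def power2_eq_square)
  then have "real (N + 1) \<le> real ((4 * (I + 1))\<^sup>2)"
    by (simp only: of_nat_le_iff)
  then have "sqrt (real N + 1) \<le> 4 * (real I + 1)"
    by (intro real_le_lsqrt) (simp_all add: add.commute)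
  then show ?thesis using I(1) by (auto simp: A_def I_def)
qed

lemma psi_ge: "psi x N \<ge> min 1 ((real x + 1) / sqrt (real N + 1)) / 12"
proof -
  obtain I where I: "4 * I * (I + 1) \<le> N + 2" "sqrt (real N + 1) \<le> 4 * (real I + 1)"
    using ex_nat_sqrt_bracket by blast
  define S where "S = sqrt (real N + 1)"
  define m where "m = min (x div 2) I"
  have S0: "S > 0" by (simp add: S_def)
  have "m \<le> I" by (simp add: m_def)
  then have "4 * m * (m + 1) \<le> 4 * I * (I + 1)"
    by (intro mult_le_mono) auto
  then have mode: "(real m + 1) * srw_mode N / 2 \<le> psi x N"
    using I(1) by (intro psi_ge_mode) (auto simp: m_def)
  have "min 1 ((real x + 1) / S) / 12 \<le> (real m + 1) / (3 * S)"
  proof (cases "x div 2 \<le> I")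
    case True
    then have "real x + 1 \<le> 2 * (real m + 1)" by (simp add: m_def)
    then have "(real x + 1) / S \<le> 2 * ((real m + 1) / S)"
      using S0 divide_right_mono[of "real x + 1" "2 * (real m + 1)" S] by simp
    moreover have "(real m + 1) / S \<ge> 0" using S0 by simp
    moreover have "(real m + 1) / (3 * S) = (real m + 1) / S / 3" by simp
    moreover have "min 1 ((real x + 1) / S) \<le> (real x + 1) / S" by simp
    ultimately show ?thesis by linarith
  next
    case False
    then have "1 / 12 \<le> (real m + 1) / (3 * S)"
      using I(2) S0 by (simp add: m_def S_def field_simps)
    then show ?thesis by (simp add: min_le_iff_disj)
  qed
  also have "\<dots> = (real m + 1) * (2 / (3 * S)) / 2"
    using S0 by (simp add: field_simps)
  also have "\<dots> \<le> (real m + 1) * srw_mode N / 2"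
    using srw_mode_ge[of N] by (intro divide_right_mono mult_left_mono) (auto simp: S_def)
  finally show ?thesis using mode by (simp add: S_def)
qed

subsection \<open>The conditioned kernel\<close>

lemma p_half_commute: "p_half n x y = p_half n y x"
  using srw_p_minus[of n "int x - int y"] by (simp add: p_half_def add.commute)

lemma p_half_le_envelope: "p_half n x y \<le> srw_envelope n (real x - real y)"
proof -
  have "p_half n x y \<le> srw_p n (int x - int y)"
    unfolding p_half_def using srw_p_nonneg[of n "int x + int y + 2"] by simp
  also have "\<dots> \<le> srw_envelope n (real x - real y)"
    using srw_p_le_envelope[of n "int x - int y"] by simp
  finally show ?thesis .
qed

lemma p_half_le_boundary_of_le:
  assumes "y \<le> x"
  shows "p_half n x y \<le> (real y + 1) * (2 * (real x + real y + 1) / (real n + 1)) * srw_envelope n (real x - real y)"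
proof -
  define f where "f = (\<lambda>i::nat. srw_p n (int x - int y + 2 * int i))"
  define E where "E = srw_envelope n (real x - real y)"
  have "p_half n x y = f 0 - f (Suc y)"
    unfolding p_half_def f_def by (simp add: algebra_simps)
  also have "\<dots> = (\<Sum>i<Suc y. f i - f (Suc i))" by (rule sum_lessThan_telescope'[symmetric])
  also have "\<dots> \<le> (\<Sum>i<Suc y. E * (2 * (real x + real y + 1) / (real n + 1)))"
  proof (rule sum_mono)
    fix i assume "i \<in> {..<Suc y}"
    define z where "z = int x - int y + 2 * int i"
    have z0: "z \<ge> 0" using assms by (simp add: z_def)
    have "f i - f (Suc i) = srw_p n z - srw_p n (z + 2)"
      unfolding f_def z_def by (simp add: algebra_simps)
    also have "\<dots> \<le> srw_p n z * ((2 * real_of_int z + 2) / (real n + 2))"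
      using srw_p_add_2_ge[OF z0, of n] by (simp add: algebra_simps)
    also have "\<dots> \<le> E * (2 * (real x + real y + 1) / (real n + 1))"
    proof (rule mult_mono)
      have "\<bar>real x - real y\<bar> \<le> \<bar>real_of_int z\<bar>"
        using assms by (simp add: z_def)
      then show "srw_p n z \<le> E"
        unfolding E_def using srw_p_le_envelope[of n z] srw_envelope_abs_mono order_trans by blast
      show "(2 * real_of_int z + 2) / (real n + 2) \<le> 2 * (real x + real y + 1) / (real n + 1)"
        using z0 \<open>i \<in> {..<Suc y}\<close> by (intro frac_le) (auto simp: z_def)
    qed (use z0 in \<open>auto simp: E_def srw_envelope_nonneg\<close>)
    finally show "f i - f (Suc i) \<le> E * (2 * (real x + real y + 1) / (real n + 1))" .
  qed
  also have "\<dots> = (real y + 1) * (2 * (real x + real y + 1) / (real n + 1)) * E" by simp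
  finally show ?thesis unfolding E_def .
qed

lemma p_half_le_boundary:
  "p_half n x y \<le> (real x + 1) * (2 * (real x + real y + 1) / (real n + 1)) * srw_envelope n (real x - real y)"
proof (cases "y \<le> x")
  case True
  have "p_half n x y \<le> (real y + 1) * (2 * (real x + real y + 1) / (real n + 1)) * srw_envelope n (real x - real y)"
    by (rule p_half_le_boundary_of_le[OF True])
  also have "\<dots> \<le> (real x + 1) * (2 * (real x + real y + 1) / (real n + 1)) * srw_envelope n (real x - real y)"
    using True by (intro mult_right_mono) (auto simp: srw_envelope_nonneg)
  finally show ?thesis .
next
  case False
  then show ?thesis
    using p_half_le_boundary_of_le[of x y n] p_half_commute[of n x y]
    by (simp add: srw_envelope_def power2_commute add.commute)
qed

lemma real_sqrt_le_double: "a \<le> 4 * b \<Longrightarrow> sqrt a \<le> 2 * sqrt b"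
  using real_sqrt_le_mono[of a "4 * b"] by (simp add: real_sqrt_mult)

lemma sqrt_Suc_le_double_cases:
  assumes "n \<le> N"
  obtains "sqrt (real N + 1) \<le> 2 * sqrt (real (N - n) + 1)"
    | "sqrt (real N + 1) \<le> 2 * sqrt (real n + 1)"
proof (cases "real N + 1 \<le> 4 * (real (N - n) + 1)")
  case True
  then show thesis by (intro that(1) real_sqrt_le_double)
next
  case False
  then have "real N + 1 \<le> 4 * (real n + 1)" using assms by (simp add: of_nat_diff)
  then show thesis by (intro that(2) real_sqrt_le_double)
qed

lemma psi_ratio_cases:
  fixes x y N n :: nat
  assumes "n \<le> N"
  defines "s \<equiv> sqrt (real n + 1)"
  defines "\<rho> \<equiv> psi y (N - n) / psi x N"
  obtains "\<rho> \<le> 12"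
    | "\<rho> \<le> 96 * ((real y + 1) / (real x + 1))"
    | "real x + 1 < 2 * s" "\<rho> \<le> 24 * (s / (real x + 1))"
proof -
  define S where "S = sqrt (real N + 1)"
  define T where "T = sqrt (real (N - n) + 1)"
  have S0: "S > 0" and T0: "T > 0" by (simp_all add: S_def T_def)
  have num: "psi y (N - n) \<ge> 0" "psi y (N - n) \<le> 1" "psi y (N - n) \<le> 4 * (real y + 1) / T"
    unfolding T_def by (rule psi_nonneg psi_le_1 psi_le)+
  have den: "psi x N \<ge> min 1 ((real x + 1) / S) / 12"
    using psi_ge[of x N] by (simp add: S_def)
  show thesis
  proof (cases "real x + 1 \<ge> S")
    case True
    then have "psi x N \<ge> 1 / 12" using den S0 by (simp add: min_def)
    then show thesis using num by (intro that(1)) (simp add: \<rho>_def divide_le_eq)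
  next
    case False
    then have bx: "psi x N \<ge> (real x + 1) / (12 * S)" using den S0 by (simp add: min_def)
    have x0: "(real x + 1) / (12 * S) > 0" using S0 by simp
    from assms(1) show thesis
    proof (cases rule: sqrt_Suc_le_double_cases)
      case 1
      have "\<rho> \<le> (4 * (real y + 1) / T) / ((real x + 1) / (12 * S))"
        unfolding \<rho>_def by (rule frac_le) (use num bx x0 T0 in auto)
      also have "\<dots> = 48 * ((real y + 1) / (real x + 1)) * (S / T)"
        using S0 T0 by (simp add: field_simps)
      also have "\<dots> \<le> 48 * ((real y + 1) / (real x + 1)) * 2"
        using 1 T0 by (intro mult_left_mono) (auto simp: S_def T_def field_simps)
      finally show thesis by (intro that(2)) simp
    next
      case 2
      then have "S \<le> 2 * s" by (simp add: S_def s_def)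
      have "\<rho> \<le> 1 / ((real x + 1) / (12 * S))"
        unfolding \<rho>_def by (rule frac_le) (use num bx x0 in auto)
      also have "\<dots> \<le> 24 * (s / (real x + 1))"
        using \<open>S \<le> 2 * s\<close> by (simp add: divide_right_mono)
      finally show thesis
        using \<open>\<not> real x + 1 \<ge> S\<close> \<open>S \<le> 2 * s\<close> by (intro that(3)) auto
    qed
  qed
qed

lemma p_half_mul_ratio_le:
  fixes x y n :: nat
  defines "s \<equiv> sqrt (real n + 1)"
  defines "u \<equiv> \<bar>real x - real y\<bar> / s"
  shows "p_half n x y * ((real y + 1) / (real x + 1)) \<le> 2 * (4 + u)\<^sup>2 * srw_envelope n (real x - real y)"
proof -
  define G where "G = srw_envelope n (real x - real y)"
  have s0: "s > 0" and u0: "u \<ge> 0" and G0: "G \<ge> 0"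
    by (simp_all add: s_def u_def G_def srw_envelope_nonneg)
  have r0: "(real y + 1) / (real x + 1) \<ge> 0" by simp
  have y: "real y + 1 \<le> (real x + 1) + u * s"
    using s0 by (simp add: u_def)
  have c1: "1 + u \<le> 2 * (4 + u)\<^sup>2"
    using u0 by (simp add: power2_eq_square algebra_simps)
  have "(1 + u) * (2 + u) \<le> (4 + u)\<^sup>2"
    unfolding power2_eq_square using u0 by (intro mult_mono) auto
  then have c2: "2 * (1 + u) * (2 + u) \<le> 2 * (4 + u)\<^sup>2" by linarith
  have "p_half n x y * ((real y + 1) / (real x + 1)) \<le> 2 * (4 + u)\<^sup>2 * G"
  proof (cases "real x + 1 \<ge> s")
    case True
    have "(real y + 1) / (real x + 1) \<le> ((real x + 1) + u * s) / (real x + 1)"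
      using y by (intro divide_right_mono) auto
    also have "\<dots> = 1 + u * (s / (real x + 1))"
      by (simp add: add_divide_distrib)
    also have "\<dots> \<le> 1 + u * 1"
      using mult_left_mono[of "s / (real x + 1)" 1 u] True u0 by simp
    finally have "p_half n x y * ((real y + 1) / (real x + 1)) \<le> G * (1 + u)"
      using p_half_le_envelope[of n x y] G0 r0 unfolding G_def by (intro mult_mono) auto
    also have "\<dots> \<le> 2 * (4 + u)\<^sup>2 * G"
      using mult_right_mono[OF c1 G0] by (simp add: mult.commute)
    finally show ?thesis .
  next
    case False
    have "p_half n x y * ((real y + 1) / (real x + 1))
        \<le> (real x + 1) * (2 * (real x + real y + 1) / (s * s)) * G * ((real y + 1) / (real x + 1))"
      using p_half_le_boundary[of n x y] r0 by (intro mult_right_mono) (simp_all add: G_def s_def)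
    also have "\<dots> = 2 * ((real y + 1) / s) * ((real x + real y + 1) / s) * G"
      using s0 by (simp add: divide_simps) (simp add: algebra_simps)
    also have "\<dots> \<le> 2 * (1 + u) * (2 + u) * G"
    proof -
      have "real y + 1 \<le> (1 + u) * s" "real x + real y + 1 \<le> (2 + u) * s"
        using y False by (simp_all add: algebra_simps)
      then have "(real y + 1) / s \<le> 1 + u" "(real x + real y + 1) / s \<le> 2 + u"
        using s0 by (simp_all add: pos_divide_le_eq)
      then show ?thesis using G0 s0 u0 by (intro mult_right_mono mult_mono) auto
    qed
    also have "\<dots> \<le> 2 * (4 + u)\<^sup>2 * G"
      using mult_right_mono[OF c2 G0] .
    finally show ?thesis .
  qed
  then show ?thesis by (simp add: G_def)
qed

lemma p_half_mul_scale_le: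
  fixes x y n :: nat
  defines "s \<equiv> sqrt (real n + 1)"
  defines "u \<equiv> \<bar>real x - real y\<bar> / s"
  assumes "real x + 1 \<le> 2 * s"
  shows "p_half n x y * (s / (real x + 1)) \<le> 8 * (4 + u)\<^sup>2 * srw_envelope n (real x - real y)"
proof -
  define G where "G = srw_envelope n (real x - real y)"
  have s0: "s > 0" and u0: "u \<ge> 0" and G0: "G \<ge> 0"
    by (simp_all add: s_def u_def G_def srw_envelope_nonneg)
  have "p_half n x y \<le> (real x + 1) * (2 * (real x + real y + 1) / (s * s)) * G"
    using p_half_le_boundary[of n x y] by (simp add: G_def s_def)
  then have "p_half n x y * (s / (real x + 1))
      \<le> (real x + 1) * (2 * (real x + real y + 1) / (s * s)) * G * (s / (real x + 1))"
    using s0 by (intro mult_right_mono) auto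
  also have "\<dots> = 2 * ((real x + real y + 1) / s) * G"
    using s0 by (simp add: divide_simps)
  also have "\<dots> \<le> 2 * (4 + u) * G"
  proof -
    have "real x + real y + 1 \<le> 2 * (real x + 1) + \<bar>real x - real y\<bar>" by simp
    also have "\<dots> \<le> (4 + u) * s"
      using assms(3) s0 by (simp add: u_def algebra_simps)
    finally have "(real x + real y + 1) / s \<le> 4 + u"
      using s0 by (simp add: pos_divide_le_eq)
    then show ?thesis using G0 by (intro mult_right_mono mult_left_mono) auto
  qed
  also have "\<dots> \<le> 8 * (4 + u)\<^sup>2 * G"
  proof -
    have "2 * (4 + u) \<le> 8 * (4 + u)\<^sup>2"
      using u0 by (simp add: power2_eq_square algebra_simps)
    from mult_right_mono[OF this G0] show ?thesis .
  qed
  finally show ?thesis by (simp add: G_def)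
qed

lemma pfrak_le_envelope:
  fixes x y N n :: nat
  assumes "n \<le> N"
  defines "u \<equiv> \<bar>real x - real y\<bar> / sqrt (real n + 1)"
  shows "pfrak N n x y \<le> 192 * (4 + u)\<^sup>2 * srw_envelope n (real x - real y)"
proof -
  define s where "s = sqrt (real n + 1)"
  define G where "G = srw_envelope n (real x - real y)"
  define \<rho> where "\<rho> = psi y (N - n) / psi x N"
  have G0: "G \<ge> 0" and u0: "u \<ge> 0" and \<rho>0: "\<rho> \<ge> 0"
    by (simp_all add: G_def u_def \<rho>_def srw_envelope_nonneg psi_nonneg)
  have "p_half n x y * \<rho> \<le> 192 * (4 + u)\<^sup>2 * G"
  proof (cases "p_half n x y \<le> 0")
    case True
    then have "p_half n x y * \<rho> \<le> 0" using \<rho>0 by (simp add: mult_nonpos_nonneg)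
    then show ?thesis using G0 by (meson order_trans zero_le_mult_iff zero_le_numeral zero_le_power2)
  next
    case False
    then have h0: "p_half n x y \<ge> 0" by simp
    show ?thesis
    proof (cases rule: psi_ratio_cases[OF assms(1), where x = x and y = y, folded s_def \<rho>_def])
      case 1
      have "p_half n x y * \<rho> \<le> 12 * G"
        using mult_mono[OF p_half_le_envelope 1 srw_envelope_nonneg \<rho>0] by (simp add: G_def mult.commute)
      also have "\<dots> \<le> 192 * (4 + u)\<^sup>2 * G"
        using power_mono[of 4 "4 + u" 2] u0 G0 by (intro mult_right_mono) auto
      finally show ?thesis .
    next
      case 2
      have "p_half n x y * \<rho> \<le> 96 * (p_half n x y * ((real y + 1) / (real x + 1)))"
        using mult_left_mono[OF 2 h0] by (simp only: mult.left_commute)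
      also have "\<dots> \<le> 192 * (4 + u)\<^sup>2 * G"
        using p_half_mul_ratio_le[of n x y] by (simp add: G_def u_def)
      finally show ?thesis .
    next
      case 3
      have "p_half n x y * \<rho> \<le> 24 * (p_half n x y * (s / (real x + 1)))"
        using mult_left_mono[OF 3(2) h0] by (simp only: mult.left_commute)
      also have "\<dots> \<le> 192 * (4 + u)\<^sup>2 * G"
        using p_half_mul_scale_le[of x n y] 3(1) by (simp add: G_def u_def s_def)
      finally show ?thesis .
    qed
  qed
  then show ?thesis by (simp add: pfrak_def \<rho>_def G_def)
qed

lemma srw_envelope_scaled:
  "srw_envelope n z = 2 / sqrt (real n + 1) * exp (- (\<bar>z\<bar> / sqrt (real n + 1))\<^sup>2 / 8)"
  by (simp add: srw_envelope_def power_divide field_simps)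

lemma square_mul_exp_neg_square_le:
  fixes u b :: real
  assumes "u \<ge> 0"
  shows "(4 + u)\<^sup>2 * exp (- u\<^sup>2 / 8) \<le> 16 * exp (2 * (2 * b + 1 / 2)\<^sup>2) * exp (- (2 * b * u))"
proof -
  have "1 + u / 4 \<le> exp (u / 4)" by (rule exp_ge_add_one_self)
  then have "4 + u \<le> 4 * exp (u / 4)" by linarith
  then have "(4 + u)\<^sup>2 \<le> (4 * exp (u / 4))\<^sup>2"
    using assms by (intro power_mono) auto
  also have "\<dots> = 16 * exp (u / 2)"
    by (simp add: power_mult_distrib power2_eq_square exp_add[symmetric])
  finally have "(4 + u)\<^sup>2 * exp (- u\<^sup>2 / 8) \<le> 16 * (exp (u / 2) * exp (- u\<^sup>2 / 8))"
    by (simp add: mult_right_mono)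
  also have "\<dots> \<le> 16 * (exp (2 * (2 * b + 1 / 2)\<^sup>2) * exp (- (2 * b * u)))"
  proof -
    have "u / 2 + - u\<^sup>2 / 8 = 2 * (2 * b + 1 / 2)\<^sup>2 + - (2 * b * u) - (u - 4 * (2 * b + 1 / 2))\<^sup>2 / 8"
      by (simp add: power2_eq_square field_simps)
    then have "u / 2 + - u\<^sup>2 / 8 \<le> 2 * (2 * b + 1 / 2)\<^sup>2 + - (2 * b * u)"
      by (simp add: divide_nonneg_pos)
    then show ?thesis by (simp add: exp_add[symmetric])
  qed
  finally show ?thesis by (simp add: mult.assoc)
qed

lemma exp_neg_div_sqrt_Suc_le:
  fixes b d :: real
  assumes "b \<ge> 0" and "d \<ge> 0" and "n \<ge> 1"
  shows "exp (- (2 * b * (d / sqrt (real n + 1)))) \<le> exp (- b * d / sqrt (real n))"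
proof -
  have "sqrt (real n + 1) \<le> 2 * sqrt (real n)"
    using assms(3) by (intro real_sqrt_le_double) simp
  then have "2 * d / (2 * sqrt (real n)) \<le> 2 * d / sqrt (real n + 1)"
    using assms(2,3) by (intro divide_left_mono) auto
  then have "b * (d / sqrt (real n)) \<le> b * (2 * (d / sqrt (real n + 1)))"
    using assms(1) by (intro mult_left_mono) auto
  then show ?thesis by (simp add: mult.assoc mult.left_commute)
qed

theorem lemma3p8:
  fixes b :: real
  assumes "b > 0"
  shows "\<exists>C>0. \<forall>x y N n :: nat. 1 \<le> n \<longrightarrow> n \<le> N \<longrightarrow>
           pfrak N n x y \<le> C / sqrt (real n + 1) * exp (- b * \<bar>real x - real y\<bar> / sqrt (real n))"
proof (intro exI[of _ "6144 * exp (2 * (2 * b + 1 / 2)\<^sup>2)"] conjI allI impI)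
  fix x y N n :: nat
  assume n: "1 \<le> n" "n \<le> N"
  define s where "s = sqrt (real n + 1)"
  define u where "u = \<bar>real x - real y\<bar> / s"
  define K where "K = 16 * exp (2 * (2 * b + 1 / 2)\<^sup>2)"
  have s0: "s > 0" and u0: "u \<ge> 0" by (simp_all add: s_def u_def)
  have "pfrak N n x y \<le> 384 / s * ((4 + u)\<^sup>2 * exp (- u\<^sup>2 / 8))"
    using pfrak_le_envelope[OF n(2), of x y] by (simp add: srw_envelope_scaled u_def s_def)
  also have "\<dots> \<le> 384 / s * (K * exp (- (2 * b * u)))"
    using square_mul_exp_neg_square_le[OF u0, of b] s0 unfolding K_def by (intro mult_left_mono) auto
  also have "\<dots> \<le> 384 / s * (K * exp (- b * \<bar>real x - real y\<bar> / sqrt (real n)))"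
    using exp_neg_div_sqrt_Suc_le[of b "\<bar>real x - real y\<bar>" n] assms n(1) s0
    unfolding K_def u_def s_def by (intro mult_left_mono) auto
  finally show "pfrak N n x y \<le> 6144 * exp (2 * (2 * b + 1 / 2)\<^sup>2) / sqrt (real n + 1)
      * exp (- b * \<bar>real x - real y\<bar> / sqrt (real n))"
    by (simp add: K_def s_def)
qed simp

end
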